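(* Let $\omega\colon\mathbf Z_+\to(0,+\infty)$ be a weight which is bounded from below. Then $\mathrm{span}[h_m(\mu,\cdot);\ m\ge0,\ \mu\in\mathbf D]$ is dense in $\mathcal X_\omega$. In particular, for $\omega=\omega_0$ with $\omega_0(n)=(n+1)/\pi$, the set $\{h_m(\mu,\cdot);\ m\ge0,\ \mu\in\mathbf D\}$ spans a dense subspace of $\mathcal X_{\omega_0}$.
   Context: $\mathbf D$ is the open unit disk. $\mathcal X_\omega$ is the Hilbert space of holomorphic functions $f(z)=\sum_{n\ge3}c_nz^n$ on $\mathbf D$ with $\|f\|_\omega^2=\sum_{n\ge3}|c_n|^2/\omega(n)<\infty$ (the quotient of the weighted Bergman space $\mathcal B^2_\omega$ by $\mathrm{span}[1,z,z^2]$). For $\mu\in\mathbf C$ and $m\ge1$, $h_m(\mu,z)=\sum_{n\ge0}\mu^n(z^{(6m+4)2^n}-z^{(2m+1)2^n})$, and $h_0(\mu,z)=\sum_{n\ge0}\mu^nz^{2^{n+2}}$; when $\omega$ is bounded from below these belong to $\mathcal X_\omega$ for $\mu\in\mathbf D$. *)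

theory Defs
  imports "HOL-Analysis.Analysis"
begin

definition taylor_coef :: "(complex \<Rightarrow> complex) \<Rightarrow> nat \<Rightarrow> complex" where
  "taylor_coef f n = (deriv ^^ n) f 0 / of_nat (fact n)"

definition X_omega :: "(nat \<Rightarrow> real) \<Rightarrow> (complex \<Rightarrow> complex) set" where
  "X_omega \<omega> = {f. f holomorphic_on ball 0 1 \<and> (\<forall>n<3. taylor_coef f n = 0) \<and>
      summable (\<lambda>n. (cmod (taylor_coef f n))\<^sup>2 / \<omega> n)}"

definition norm_omega :: "(nat \<Rightarrow> real) \<Rightarrow> (complex \<Rightarrow> complex) \<Rightarrow> real" where
  "norm_omega \<omega> f = sqrt (\<Sum>n. (cmod (taylor_coef f n))\<^sup>2 / \<omega> n)"

definition h_fun :: "nat \<Rightarrow> complex \<Rightarrow> complex \<Rightarrow> complex" where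
  "h_fun m \<mu> z = (if m = 0 then (\<Sum>n. \<mu> ^ n * z ^ (2 ^ (n + 2)))
     else (\<Sum>n. \<mu> ^ n * (z ^ ((6 * m + 4) * 2 ^ n) - z ^ ((2 * m + 1) * 2 ^ n))))"

definition h_span_dense :: "(nat \<Rightarrow> real) \<Rightarrow> bool" where
  "h_span_dense \<omega> \<longleftrightarrow>
     (\<forall>f \<in> X_omega \<omega>. \<forall>\<epsilon>>0. \<exists>(k::nat) (a::nat \<Rightarrow> complex) (ms::nat \<Rightarrow> nat) (\<mu>s::nat \<Rightarrow> complex).
        (\<forall>i<k. \<mu>s i \<in> ball 0 1) \<and>
        norm_omega \<omega> (\<lambda>z. f z - (\<Sum>i<k. a i * h_fun (ms i) (\<mu>s i) z)) < \<epsilon>)"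

definition omega0 :: "nat \<Rightarrow> real" where
  "omega0 n = (real n + 1) / pi"

end

theory Submission
  imports Defs "HOL-Complex_Analysis.Complex_Analysis"
begin

(*
  Taking Taylor coefficients identifies X_omega with a weighted l^2 space of sequences vanishing
  below 3, and the coefficient sequence of h_m(mu, .) is sum_j mu^j v_(m,j) with
  v_(0,j) = e_(2^(j+2)) and v_(m,j) = e_((6m+4) 2^j) - e_((2m+1) 2^j). A closed subspace that
  contains such a power series for all small real mu contains each of its coefficients (subtract
  the lower ones, divide by mu^N and let mu -> 0), so every v_(m,j) lies in the closed span.
  Writing k = q 2^e with q odd, this puts e_(2^e) (e >= 2) and e_((3q+1) 2^e) - e_(q 2^e) into
  the closed span: one Collatz step. Rather than following the chain down to a power of two, use
  that it yields infinitely many k < k_1 < k_2 < ... with e_(k_i) - e_k in the closed span; the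
  average of M of them lies within 1 / sqrt (M c) of e_k when omega >= c. Hence e_k is in the
  closed span for all k >= 3, and truncating Taylor series finishes the proof.
*)

definition unit_seq :: "nat \<Rightarrow> nat \<Rightarrow> complex" where
  "unit_seq k n = (if n = k then 1 else 0)"

lemma sum_unit_seq_strict_mono:
  fixes kk :: "nat \<Rightarrow> nat"
  assumes "strict_mono kk"
  shows "(\<Sum>i<M. unit_seq (kk i) n) = (if n \<in> kk ` {..<M} then 1 else 0)"
proof (cases "n \<in> kk ` {..<M}")
  case True
  then obtain j where j: "j < M" "n = kk j"
    by auto
  have "(\<Sum>i<M. unit_seq (kk i) n) = (\<Sum>i<M. if i = j then 1 else 0)"
    using strict_mono_eq[OF assms] j by (intro sum.cong) (auto simp: unit_seq_def)
  then show ?thesis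
    using True j by simp
next
  case False
  then show ?thesis
    by (auto simp: unit_seq_def intro!: sum.neutral)
qed

definition lin_span :: "(nat \<Rightarrow> complex) set \<Rightarrow> (nat \<Rightarrow> complex) set" where
  "lin_span G = {(\<lambda>n. \<Sum>i<k. a i * g i n) | (k::nat) a g. \<forall>i<k. g i \<in> G}"

lemma lin_span_zero: "(\<lambda>n. 0) \<in> lin_span G"
  unfolding lin_span_def by (intro CollectI exI[of _ 0]) auto

lemma lin_span_generator: "g \<in> G \<Longrightarrow> g \<in> lin_span G"
  unfolding lin_span_def by (intro CollectI exI[of _ 1] exI[of _ "\<lambda>_. 1"] exI[of _ "\<lambda>_. g"]) auto

lemma lin_span_scale: "x \<in> lin_span G \<Longrightarrow> (\<lambda>n. b * x n) \<in> lin_span G"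
  unfolding lin_span_def
  by (force simp: sum_distrib_left mult.assoc intro!: exI[of _ "\<lambda>i. b * _ i"])

lemma sum_lessThan_add:
  "(\<Sum>i<k + l. f i) = (\<Sum>i<k. f i) + (\<Sum>i<l. f (k + i))" for f :: "nat \<Rightarrow> 'a::comm_monoid_add"
  by (induction l) (simp_all add: add.assoc)

lemma lin_span_add:
  assumes "x \<in> lin_span G" "y \<in> lin_span G"
  shows "(\<lambda>n. x n + y n) \<in> lin_span G"
proof -
  obtain k :: nat and a g where x: "\<forall>i<k. g i \<in> G" "x = (\<lambda>n. \<Sum>i<k. a i * g i n)"
    using assms(1) unfolding lin_span_def by blast
  obtain l :: nat and b h where y: "\<forall>i<l. h i \<in> G" "y = (\<lambda>n. \<Sum>i<l. b i * h i n)"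
    using assms(2) unfolding lin_span_def by blast
  define a' where "a' i = (if i < k then a i else b (i - k))" for i
  define g' where "g' i = (if i < k then g i else h (i - k))" for i
  have "(\<lambda>n. x n + y n) = (\<lambda>n. \<Sum>i<k + l. a' i * g' i n)"
    by (simp add: sum_lessThan_add x(2) y(2) a'_def g'_def)
  moreover have "\<forall>i<k + l. g' i \<in> G"
    using x(1) y(1) by (auto simp: g'_def)
  ultimately show ?thesis
    unfolding lin_span_def by blast
qed

locale positive_weight =
  fixes \<omega> :: "nat \<Rightarrow> real"
  assumes weight_pos: "\<And>n. \<omega> n > 0"
begin

definition weighted_summable :: "(nat \<Rightarrow> complex) \<Rightarrow> bool" where
  "weighted_summable x \<longleftrightarrow> summable (\<lambda>n. (cmod (x n))\<^sup>2 / \<omega> n)"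

definition weighted_norm :: "(nat \<Rightarrow> complex) \<Rightarrow> real" where
  "weighted_norm x = sqrt (\<Sum>n. (cmod (x n))\<^sup>2 / \<omega> n)"

lemma weighted_term_nonneg: "0 \<le> (cmod z)\<^sup>2 / \<omega> n"
  using weight_pos[of n] by simp

lemma weighted_norm_nonneg: "weighted_summable x \<Longrightarrow> 0 \<le> weighted_norm x"
  unfolding weighted_summable_def weighted_norm_def
  by (simp add: suminf_nonneg weighted_term_nonneg)

lemma weighted_norm_zero [simp]: "weighted_norm (\<lambda>n. 0) = 0"
  by (simp add: weighted_norm_def)

lemma weighted_norm_finite_support:
  assumes "finite S" "\<And>n. n \<notin> S \<Longrightarrow> x n = 0"
  shows "weighted_summable x" "weighted_norm x = sqrt (\<Sum>n\<in>S. (cmod (x n))\<^sup>2 / \<omega> n)"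
proof -
  have vanish: "(cmod (x n))\<^sup>2 / \<omega> n = 0" if "n \<notin> S" for n
    using assms(2)[OF that] by simp
  show "weighted_summable x" "weighted_norm x = sqrt (\<Sum>n\<in>S. (cmod (x n))\<^sup>2 / \<omega> n)"
    using summable_finite[OF assms(1) vanish] suminf_finite[OF assms(1) vanish]
    by (simp_all add: weighted_summable_def weighted_norm_def)
qed

lemma weighted_summable_unit_seq: "weighted_summable (unit_seq k)"
  by (rule weighted_norm_finite_support[of "{k}"]) (auto simp: unit_seq_def)

lemma weighted_norm_dominated:
  assumes y: "weighted_summable y" and K: "K \<ge> 0" and le: "\<And>n. cmod (x n) \<le> K * cmod (y n)"
  shows "weighted_summable x" "weighted_norm x \<le> K * weighted_norm y"
proof -
  have term_le: "(cmod (x n))\<^sup>2 / \<omega> n \<le> K\<^sup>2 * ((cmod (y n))\<^sup>2 / \<omega> n)" for n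
  proof -
    have "(cmod (x n))\<^sup>2 \<le> (K * cmod (y n))\<^sup>2"
      using le[of n] by (intro power_mono) auto
    then have "(cmod (x n))\<^sup>2 / \<omega> n \<le> (K * cmod (y n))\<^sup>2 / \<omega> n"
      using weight_pos[of n] by (intro divide_right_mono) auto
    then show ?thesis
      by (simp add: power_mult_distrib)
  qed
  have sy: "summable (\<lambda>n. K\<^sup>2 * ((cmod (y n))\<^sup>2 / \<omega> n))"
    using y unfolding weighted_summable_def by (rule summable_mult)
  have sx: "summable (\<lambda>n. (cmod (x n))\<^sup>2 / \<omega> n)"
    by (rule summable_comparison_test'[OF sy, of 0])
      (simp only: real_norm_def abs_of_nonneg[OF weighted_term_nonneg] term_le)
  then show "weighted_summable x"
    by (simp add: weighted_summable_def)
  have "(\<Sum>n. (cmod (x n))\<^sup>2 / \<omega> n) \<le> (\<Sum>n. K\<^sup>2 * ((cmod (y n))\<^sup>2 / \<omega> n))"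
    by (rule suminf_le[OF term_le sx sy])
  also have "\<dots> = K\<^sup>2 * (\<Sum>n. (cmod (y n))\<^sup>2 / \<omega> n)"
    using y by (intro suminf_mult) (simp add: weighted_summable_def)
  finally have "weighted_norm x \<le> sqrt (K\<^sup>2 * (\<Sum>n. (cmod (y n))\<^sup>2 / \<omega> n))"
    unfolding weighted_norm_def by (rule real_sqrt_le_mono)
  also have "\<dots> = K * weighted_norm y"
    using K by (simp add: weighted_norm_def real_sqrt_mult)
  finally show "weighted_norm x \<le> K * weighted_norm y" .
qed

lemma weighted_norm_scale:
  assumes "weighted_summable x"
  shows "weighted_summable (\<lambda>n. a * x n)" "weighted_norm (\<lambda>n. a * x n) = cmod a * weighted_norm x"
proof -
  show "weighted_summable (\<lambda>n. a * x n)"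
    by (rule weighted_norm_dominated[OF assms, of "cmod a"]) (simp_all add: norm_mult)
  have "(\<Sum>n. (cmod (a * x n))\<^sup>2 / \<omega> n) = (\<Sum>n. (cmod a)\<^sup>2 * ((cmod (x n))\<^sup>2 / \<omega> n))"
    by (simp add: norm_mult power_mult_distrib)
  also have "\<dots> = (cmod a)\<^sup>2 * (\<Sum>n. (cmod (x n))\<^sup>2 / \<omega> n)"
    using assms by (intro suminf_mult) (simp add: weighted_summable_def)
  finally have "(\<Sum>n. (cmod (a * x n))\<^sup>2 / \<omega> n) = (cmod a)\<^sup>2 * (\<Sum>n. (cmod (x n))\<^sup>2 / \<omega> n)" .
  then show "weighted_norm (\<lambda>n. a * x n) = cmod a * weighted_norm x"
    by (simp add: weighted_norm_def real_sqrt_mult)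
qed

lemma weighted_term_eq_square: "(cmod z / sqrt (\<omega> n))\<^sup>2 = (cmod z)\<^sup>2 / \<omega> n"
  using weight_pos[of n] by (simp add: power_divide)

lemma weighted_partial_norm_le:
  assumes "weighted_summable x"
  shows "L2_set (\<lambda>n. cmod (x n) / sqrt (\<omega> n)) {..<K} \<le> weighted_norm x"
proof -
  have "(\<Sum>n<K. (cmod (x n) / sqrt (\<omega> n))\<^sup>2) \<le> (\<Sum>n. (cmod (x n))\<^sup>2 / \<omega> n)"
    using assms unfolding weighted_term_eq_square
    by (auto simp: weighted_summable_def weighted_term_nonneg intro!: sum_le_suminf)
  then show ?thesis
    by (simp add: L2_set_def weighted_norm_def)
qed

lemma weighted_norm_triangle:
  assumes x: "weighted_summable x" and y: "weighted_summable y"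
  shows "weighted_summable (\<lambda>n. x n + y n)"
    "weighted_norm (\<lambda>n. x n + y n) \<le> weighted_norm x + weighted_norm y"
proof -
  define u where "u v = (\<lambda>n. cmod (v n) / sqrt (\<omega> n))" for v
  have partial: "(\<Sum>n<K. (cmod (x n + y n))\<^sup>2 / \<omega> n) \<le> (weighted_norm x + weighted_norm y)\<^sup>2" for K
  proof -
    have "L2_set (u (\<lambda>n. x n + y n)) {..<K} \<le> L2_set (\<lambda>n. u x n + u y n) {..<K}"
    proof (rule L2_set_mono)
      fix i
      have "0 \<le> sqrt (\<omega> i)"
        using weight_pos[of i] by simp
      then show "u (\<lambda>n. x n + y n) i \<le> u x i + u y i" "0 \<le> u (\<lambda>n. x n + y n) i"
        unfolding u_def add_divide_distrib[symmetric] by (simp_all add: divide_right_mono norm_triangle_ineq)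
    qed
    also have "\<dots> \<le> L2_set (u x) {..<K} + L2_set (u y) {..<K}"
      by (rule L2_set_triangle_ineq)
    also have "\<dots> \<le> weighted_norm x + weighted_norm y"
      unfolding u_def using x y by (intro add_mono weighted_partial_norm_le)
    finally have "sqrt (\<Sum>n<K. (cmod (x n + y n))\<^sup>2 / \<omega> n) \<le> weighted_norm x + weighted_norm y"
      by (simp add: L2_set_def u_def weighted_term_eq_square)
    then show ?thesis
      by (rule sqrt_le_D)
  qed
  have summable: "summable (\<lambda>n. (cmod (x n + y n))\<^sup>2 / \<omega> n)"
    by (rule summableI_nonneg_bounded[OF weighted_term_nonneg partial])
  then show "weighted_summable (\<lambda>n. x n + y n)"
    by (simp add: weighted_summable_def)
  have "(\<Sum>n. (cmod (x n + y n))\<^sup>2 / \<omega> n) \<le> (weighted_norm x + weighted_norm y)\<^sup>2"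
    using summable partial by (rule suminf_le_const)
  then show "weighted_norm (\<lambda>n. x n + y n) \<le> weighted_norm x + weighted_norm y"
    using weighted_norm_nonneg[OF x] weighted_norm_nonneg[OF y]
    by (simp add: weighted_norm_def[of "\<lambda>n. x n + y n"] real_le_lsqrt)
qed

lemma weighted_norm_diff:
  assumes "weighted_summable x" "weighted_summable y"
  shows "weighted_summable (\<lambda>n. x n - y n)"
    "weighted_norm (\<lambda>n. x n - y n) \<le> weighted_norm x + weighted_norm y"
  using weighted_norm_triangle[OF assms(1) weighted_norm_scale(1)[OF assms(2), of "-1"]]
    weighted_norm_scale(2)[OF assms(2), of "-1"]
  by simp_all

lemma weighted_norm_unit_average_le:
  fixes kk :: "nat \<Rightarrow> nat"
  assumes c: "c > 0" "\<And>n. c \<le> \<omega> n" and mono: "strict_mono kk" and "M > 0"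
  shows "weighted_norm (\<lambda>n. (\<Sum>i<M. unit_seq (kk i) n) / of_nat M) \<le> sqrt (1 / (M * c))"
proof -
  define S where "S = kk ` {..<M}"
  have card_S: "card S = M"
    unfolding S_def using strict_mono_imp_inj_on[OF mono] by (simp add: card_image inj_on_subset)
  have "weighted_norm (\<lambda>n. (\<Sum>i<M. unit_seq (kk i) n) / of_nat M) = sqrt (\<Sum>n\<in>S. 1 / ((real M)\<^sup>2 * \<omega> n))"
    by (subst weighted_norm_finite_support(2)[of S])
      (auto simp: S_def sum_unit_seq_strict_mono[OF mono] norm_divide power_divide intro!: sum.cong)
  also have "\<dots> \<le> sqrt (\<Sum>n\<in>S. 1 / ((real M)\<^sup>2 * c))"
    using \<open>M > 0\<close> c weight_pos
    by (intro real_sqrt_le_mono sum_mono divide_left_mono mult_left_mono mult_pos_pos) auto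
  also have "\<dots> = sqrt (1 / (M * c))"
    using card_S by (simp add: power2_eq_square)
  finally show ?thesis .
qed

lemma weighted_summable_sum:
  "finite I \<Longrightarrow> (\<And>i. i \<in> I \<Longrightarrow> weighted_summable (f i)) \<Longrightarrow> weighted_summable (\<lambda>n. \<Sum>i\<in>I. f i n)"
  by (induction I rule: finite_induct)
    (simp_all add: weighted_summable_def weighted_norm_triangle(1)[unfolded weighted_summable_def])

lemma weighted_norm_diff_triangle:
  assumes "weighted_summable x" "weighted_summable y" "weighted_summable z"
  shows "weighted_norm (\<lambda>n. x n - z n) \<le> weighted_norm (\<lambda>n. x n - y n) + weighted_norm (\<lambda>n. y n - z n)"
  using weighted_norm_triangle(2)[OF weighted_norm_diff(1)[OF assms(1,2)] weighted_norm_diff(1)[OF assms(2,3)]]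
  by simp

end

locale weighted_span = positive_weight +
  fixes G :: "(nat \<Rightarrow> complex) set"
  assumes generator_summable: "\<And>g. g \<in> G \<Longrightarrow> weighted_summable g"
begin

definition span_closure :: "(nat \<Rightarrow> complex) set" where
  "span_closure = {x. weighted_summable x \<and>
     (\<forall>\<epsilon>>0. \<exists>s\<in>lin_span G. weighted_norm (\<lambda>n. x n - s n) < \<epsilon>)}"

lemma lin_span_summable:
  assumes "s \<in> lin_span G"
  shows "weighted_summable s"
proof -
  obtain k :: nat and a g where g: "\<forall>i<k. g i \<in> G" and s: "s = (\<lambda>n. \<Sum>i<k. a i * g i n)"
    using assms unfolding lin_span_def by blast
  show ?thesis
    unfolding s using g
    by (intro weighted_summable_sum weighted_norm_scale(1) generator_summable) auto
qed

lemma span_closure_summable: "x \<in> span_closure \<Longrightarrow> weighted_summable x"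
  by (simp add: span_closure_def)

lemma span_closure_approx:
  "x \<in> span_closure \<Longrightarrow> \<epsilon> > 0 \<Longrightarrow> \<exists>s\<in>lin_span G. weighted_norm (\<lambda>n. x n - s n) < \<epsilon>"
  by (simp add: span_closure_def)

lemma lin_span_subset_span_closure: "s \<in> lin_span G \<Longrightarrow> s \<in> span_closure"
  unfolding span_closure_def using lin_span_summable by force

lemma span_closure_limit:
  assumes x: "weighted_summable x"
    and approx: "\<And>\<epsilon>. \<epsilon> > 0 \<Longrightarrow> \<exists>y\<in>span_closure. weighted_norm (\<lambda>n. x n - y n) < \<epsilon>"
  shows "x \<in> span_closure"
  unfolding span_closure_def
proof (intro CollectI conjI allI impI x)
  fix \<epsilon> :: real
  assume "\<epsilon> > 0"
  then obtain y where y: "y \<in> span_closure" "weighted_norm (\<lambda>n. x n - y n) < \<epsilon> / 2"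
    using approx[of "\<epsilon> / 2"] by auto
  obtain s where s: "s \<in> lin_span G" "weighted_norm (\<lambda>n. y n - s n) < \<epsilon> / 2"
    using span_closure_approx[OF y(1)] \<open>\<epsilon> > 0\<close> by (meson half_gt_zero)
  have "weighted_norm (\<lambda>n. x n - s n) \<le> weighted_norm (\<lambda>n. x n - y n) + weighted_norm (\<lambda>n. y n - s n)"
    using x span_closure_summable[OF y(1)] lin_span_summable[OF s(1)]
    by (rule weighted_norm_diff_triangle)
  then have "weighted_norm (\<lambda>n. x n - s n) < \<epsilon>"
    using y(2) s(2) by linarith
  then show "\<exists>s\<in>lin_span G. weighted_norm (\<lambda>n. x n - s n) < \<epsilon>"
    using s(1) by blast
qed

lemma span_closure_add:
  assumes x: "x \<in> span_closure" and y: "y \<in> span_closure"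
  shows "(\<lambda>n. x n + y n) \<in> span_closure"
  unfolding span_closure_def
proof (intro CollectI conjI allI impI)
  show "weighted_summable (\<lambda>n. x n + y n)"
    using x y by (simp add: span_closure_summable weighted_norm_triangle(1))
  fix \<epsilon> :: real
  assume "\<epsilon> > 0"
  then obtain s t where s: "s \<in> lin_span G" "weighted_norm (\<lambda>n. x n - s n) < \<epsilon> / 2"
      and t: "t \<in> lin_span G" "weighted_norm (\<lambda>n. y n - t n) < \<epsilon> / 2"
    using span_closure_approx[OF x] span_closure_approx[OF y] by (meson half_gt_zero)
  have "(\<lambda>n. x n + y n - (s n + t n)) = (\<lambda>n. (x n - s n) + (y n - t n))"
    by (simp add: algebra_simps)
  then have "weighted_norm (\<lambda>n. x n + y n - (s n + t n))
      \<le> weighted_norm (\<lambda>n. x n - s n) + weighted_norm (\<lambda>n. y n - t n)"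
    using x y s(1) t(1)
    by (simp add: weighted_norm_triangle(2) weighted_norm_diff(1) span_closure_summable lin_span_summable)
  then show "\<exists>u\<in>lin_span G. weighted_norm (\<lambda>n. x n + y n - u n) < \<epsilon>"
    using s t by (intro bexI[of _ "\<lambda>n. s n + t n"] lin_span_add) auto
qed

lemma span_closure_scale:
  assumes x: "x \<in> span_closure"
  shows "(\<lambda>n. a * x n) \<in> span_closure"
  unfolding span_closure_def
proof (intro CollectI conjI allI impI)
  show "weighted_summable (\<lambda>n. a * x n)"
    using x by (simp add: span_closure_summable weighted_norm_scale(1))
  fix \<epsilon> :: real
  assume "\<epsilon> > 0"
  then have "\<epsilon> / (cmod a + 1) > 0"
    by (intro divide_pos_pos) (auto intro: add_nonneg_pos)
  then obtain s where s: "s \<in> lin_span G" "weighted_norm (\<lambda>n. x n - s n) < \<epsilon> / (cmod a + 1)"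
    using span_closure_approx[OF x] by blast
  have "weighted_norm (\<lambda>n. a * x n - a * s n) = cmod a * weighted_norm (\<lambda>n. x n - s n)"
    using weighted_norm_scale(2)[OF weighted_norm_diff(1)[of x s], of a] x s(1)
    by (simp add: span_closure_summable lin_span_summable right_diff_distrib)
  also have "\<dots> \<le> (cmod a + 1) * weighted_norm (\<lambda>n. x n - s n)"
    using x s(1) by (intro mult_right_mono weighted_norm_nonneg weighted_norm_diff(1))
      (simp_all add: span_closure_summable lin_span_summable)
  also have "\<dots> < \<epsilon>"
    using s(2) by (simp add: field_simps add_pos_nonneg)
  finally show "\<exists>u\<in>lin_span G. weighted_norm (\<lambda>n. a * x n - u n) < \<epsilon>"
    using s(1) by (intro bexI[of _ "\<lambda>n. a * s n"] lin_span_scale) auto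
qed

lemma span_closure_diff:
  "x \<in> span_closure \<Longrightarrow> y \<in> span_closure \<Longrightarrow> (\<lambda>n. x n - y n) \<in> span_closure"
  using span_closure_add[of x "\<lambda>n. (-1) * y n"] span_closure_scale[of y "-1"] by simp

lemma span_closure_zero: "(\<lambda>n. 0) \<in> span_closure"
  by (rule lin_span_subset_span_closure[OF lin_span_zero])

lemma span_closure_sum:
  "finite I \<Longrightarrow> (\<And>i. i \<in> I \<Longrightarrow> f i \<in> span_closure) \<Longrightarrow> (\<lambda>n. \<Sum>i\<in>I. f i n) \<in> span_closure"
proof (induction I rule: finite_induct)
  case empty
  then show ?case
    using span_closure_zero by simp
next
  case (insert i I)
  then show ?case
    using span_closure_add[of "f i" "\<lambda>n. \<Sum>i\<in>I. f i n"] by simp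
qed

lemma span_closure_if_linear_approx:
  assumes "\<delta> > 0" "weighted_summable x"
    and "\<And>t. 0 < t \<Longrightarrow> t \<le> \<delta> \<Longrightarrow> Y t \<in> span_closure \<and> weighted_norm (\<lambda>n. x n - Y t n) \<le> C * t"
  shows "x \<in> span_closure"
proof (rule span_closure_limit[OF assms(2)])
  fix \<epsilon> :: real
  assume "\<epsilon> > 0"
  define t where "t = min \<delta> (\<epsilon> / (\<bar>C\<bar> + 1))"
  have t: "0 < t" "t \<le> \<delta>"
    using \<open>\<delta> > 0\<close> \<open>\<epsilon> > 0\<close> by (auto simp: t_def)
  have "C * t \<le> \<bar>C\<bar> * (\<epsilon> / (\<bar>C\<bar> + 1))"
    using t by (intro order.trans[OF abs_ge_self[THEN mult_right_mono] mult_left_mono]) (auto simp: t_def)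
  also have "\<dots> < \<epsilon>"
    using \<open>\<epsilon> > 0\<close> by (simp add: field_simps)
  finally show "\<exists>y\<in>span_closure. weighted_norm (\<lambda>n. x n - y n) < \<epsilon>"
    using assms(3)[OF t] by (intro bexI[of _ "Y t"]) auto
qed

lemma taylor_coeffs_in_span_closure:
  assumes "\<delta> > 0"
    and curve: "\<And>t. 0 < t \<Longrightarrow> t \<le> \<delta> \<Longrightarrow> X t \<in> span_closure"
    and coeffs: "\<And>j. weighted_summable (v j)"
    and remainder: "\<And>N. \<exists>C. \<forall>t. 0 < t \<longrightarrow> t \<le> \<delta> \<longrightarrow>
      weighted_norm (\<lambda>n. X t n - (\<Sum>j\<le>N. of_real t ^ j * v j n)) \<le> C * t ^ Suc N"
  shows "v N \<in> span_closure"
proof (induction N rule: less_induct)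
  case (less N)
  obtain C where C: "\<And>t. 0 < t \<Longrightarrow> t \<le> \<delta> \<Longrightarrow>
      weighted_norm (\<lambda>n. X t n - (\<Sum>j\<le>N. of_real t ^ j * v j n)) \<le> C * t ^ Suc N"
    using remainder[of N] by blast
  define Y where "Y t = (\<lambda>n. inverse (of_real t ^ N) * (X t n - (\<Sum>j<N. of_real t ^ j * v j n)))" for t
  have Y_in: "Y t \<in> span_closure" if "0 < t" "t \<le> \<delta>" for t
    unfolding Y_def using that less.IH
    by (intro span_closure_scale span_closure_diff curve span_closure_sum) auto
  have Y_close: "weighted_norm (\<lambda>n. v N n - Y t n) \<le> C * t" if t: "0 < t" "t \<le> \<delta>" for t
  proof -
    define R where "R = (\<lambda>n. X t n - (\<Sum>j\<le>N. of_real t ^ j * v j n))"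
    have "weighted_summable R"
      unfolding R_def using curve[OF t] coeffs
      by (intro weighted_norm_diff(1) weighted_summable_sum weighted_norm_scale(1))
        (simp_all add: span_closure_summable)
    have "(\<lambda>n. v N n - Y t n) = (\<lambda>n. - inverse (of_real t ^ N) * R n)"
    proof
      fix n
      have "(of_real t :: complex) ^ N \<noteq> 0"
        using t by simp
      then show "v N n - Y t n = - inverse (of_real t ^ N) * R n"
        by (simp only: Y_def R_def lessThan_Suc_atMost[symmetric] sum.lessThan_Suc) (simp add: algebra_simps)
    qed
    then have "weighted_norm (\<lambda>n. v N n - Y t n) = cmod (- inverse (of_real t ^ N)) * weighted_norm R"
      by (simp only: weighted_norm_scale(2)[OF \<open>weighted_summable R\<close>])
    also have "\<dots> = weighted_norm R / t ^ N"
      using t by (simp add: norm_inverse norm_power divide_inverse)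
    also have "\<dots> \<le> C * t"
      using C[OF t] t by (simp add: R_def pos_divide_le_eq algebra_simps)
    finally show ?thesis .
  qed
  show "v N \<in> span_closure"
    using \<open>\<delta> > 0\<close> coeffs Y_in Y_close by (intro span_closure_if_linear_approx) auto
qed

lemma unit_seq_in_span_closure_if_chain:
  fixes kk :: "nat \<Rightarrow> nat"
  assumes c: "c > 0" "\<And>n. c \<le> \<omega> n"
    and mono: "strict_mono kk"
    and chain: "\<And>i. (\<lambda>n. unit_seq (kk i) n - unit_seq k n) \<in> span_closure"
  shows "unit_seq k \<in> span_closure"
proof (rule span_closure_limit[OF weighted_summable_unit_seq])
  fix \<epsilon> :: real
  assume "\<epsilon> > 0"
  obtain M :: nat where "1 / (c * \<epsilon>\<^sup>2) < M"
    using reals_Archimedean2 by blast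
  then have large: "1 < real M * c * \<epsilon>\<^sup>2"
    using c(1) \<open>\<epsilon> > 0\<close> by (simp add: field_simps)
  then have "M > 0"
    by (cases "M = 0") auto
  then have "1 / (M * c) < \<epsilon>\<^sup>2"
    using large c(1) by (simp add: pos_divide_less_eq mult.commute mult.left_commute)
  define y where "y = (\<lambda>n. (- 1 / of_nat M) * (\<Sum>i<M. unit_seq (kk i) n - unit_seq k n))"
  have "y \<in> span_closure"
    unfolding y_def using chain by (intro span_closure_scale span_closure_sum) auto
  have "(\<lambda>n. unit_seq k n - y n) = (\<lambda>n. (\<Sum>i<M. unit_seq (kk i) n) / of_nat M)"
    using \<open>M > 0\<close> by (auto simp: y_def sum_subtractf field_simps)
  then have "weighted_norm (\<lambda>n. unit_seq k n - y n) \<le> sqrt (1 / (M * c))"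
    using weighted_norm_unit_average_le[OF c mono \<open>M > 0\<close>] by simp
  also have "\<dots> < \<epsilon>"
    using \<open>1 / (M * c) < \<epsilon>\<^sup>2\<close> \<open>\<epsilon> > 0\<close> by (simp add: real_sqrt_less_iff real_less_lsqrt)
  finally show "\<exists>y\<in>span_closure. weighted_norm (\<lambda>n. unit_seq k n - y n) < \<epsilon>"
    using \<open>y \<in> span_closure\<close> by blast
qed

lemma span_closure_if_units:
  assumes x: "weighted_summable x" and units: "\<And>k. x k \<noteq> 0 \<Longrightarrow> unit_seq k \<in> span_closure"
  shows "x \<in> span_closure"
proof (rule span_closure_limit[OF x])
  fix \<epsilon> :: real
  assume "\<epsilon> > 0"
  define f where "f = (\<lambda>n. (cmod (x n))\<^sup>2 / \<omega> n)"
  have "summable f"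
    using x by (simp add: weighted_summable_def f_def)
  then obtain K where "norm (\<Sum>n. f (n + K)) < \<epsilon>\<^sup>2"
    using suminf_exist_split[of "\<epsilon>\<^sup>2" f] \<open>\<epsilon> > 0\<close> by (meson order_refl zero_less_power)
  then have tail: "(\<Sum>n. f (n + K)) < \<epsilon>\<^sup>2"
    by (simp add: abs_less_iff)
  define y where "y = (\<lambda>n. \<Sum>j<K. x j * unit_seq j n)"
  have "(\<lambda>n. x j * unit_seq j n) \<in> span_closure" for j
    using units[of j] span_closure_zero by (cases "x j = 0") (auto intro: span_closure_scale)
  then have "y \<in> span_closure"
    unfolding y_def by (intro span_closure_sum) auto
  have diff: "x n - y n = (if n < K then 0 else x n)" for n
    by (auto simp: y_def unit_seq_def if_distrib cong: if_cong)
  have terms: "(cmod (x n - y n))\<^sup>2 / \<omega> n = (if n < K then 0 else f n)" for n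
    by (simp add: diff f_def)
  have "summable (\<lambda>n. if n < K then 0 else f n)"
    using \<open>summable f\<close> by (rule summable_comparison_test'[where N=0]) (simp add: f_def weighted_term_nonneg)
  then have "(\<Sum>n. if n < K then 0 else f n) = (\<Sum>n. f (n + K))"
    by (subst suminf_split_initial_segment[where k=K]) auto
  then have "weighted_norm (\<lambda>n. x n - y n) = sqrt (\<Sum>n. f (n + K))"
    unfolding weighted_norm_def terms by simp
  also have "\<dots> < \<epsilon>"
    using tail \<open>\<epsilon> > 0\<close> by (simp add: real_sqrt_less_iff real_less_lsqrt)
  finally show "\<exists>y\<in>span_closure. weighted_norm (\<lambda>n. x n - y n) < \<epsilon>"
    using \<open>y \<in> span_closure\<close> by blast
qed

end

definition lacunary_coeffs :: "(nat \<Rightarrow> nat) \<Rightarrow> complex \<Rightarrow> nat \<Rightarrow> complex" where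
  "lacunary_coeffs p \<mu> n = (if n \<in> range p then \<mu> ^ inv p n else 0)"

lemma lacunary_coeffs_at: "strict_mono p \<Longrightarrow> lacunary_coeffs p \<mu> (p j) = \<mu> ^ j"
  using strict_mono_imp_inj_on[of p UNIV] by (simp add: lacunary_coeffs_def)

lemma lacunary_coeffs_off: "n \<notin> range p \<Longrightarrow> lacunary_coeffs p \<mu> n = 0"
  by (simp add: lacunary_coeffs_def)

lemma lacunary_series_summable:
  assumes "strict_mono p" "cmod \<mu> \<le> 1" "cmod z < 1"
  shows "summable (\<lambda>j. \<mu> ^ j * z ^ p j)"
proof (rule summable_comparison_test'[where N=0])
  show "summable (\<lambda>j. cmod z ^ j)"
    using assms(3) by (simp add: summable_geometric)
  fix j
  have "cmod (\<mu> ^ j * z ^ p j) = cmod \<mu> ^ j * cmod z ^ p j"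
    by (simp add: norm_mult norm_power)
  also have "\<dots> \<le> 1 * cmod z ^ j"
    using assms strict_mono_imp_increasing[OF assms(1), of j]
    by (intro mult_mono power_le_one power_decreasing) auto
  finally show "norm (\<mu> ^ j * z ^ p j) \<le> cmod z ^ j"
    by simp
qed

lemma lacunary_series_sums:
  assumes "strict_mono p" "cmod \<mu> \<le> 1" "cmod z < 1"
  shows "(\<lambda>n. lacunary_coeffs p \<mu> n * z ^ n) sums (\<Sum>j. \<mu> ^ j * z ^ p j)"
proof -
  have "(\<lambda>j. lacunary_coeffs p \<mu> (p j) * z ^ p j) sums (\<Sum>j. \<mu> ^ j * z ^ p j)"
    using summable_sums[OF lacunary_series_summable[OF assms]] lacunary_coeffs_at[OF assms(1)] by simp
  then show ?thesis
    by (subst sums_mono_reindex[OF assms(1), symmetric]) (auto simp: lacunary_coeffs_off)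
qed

lemma lacunary_coeffs_remainder_le:
  assumes p: "strict_mono p" and t: "0 < t" "t \<le> 1/2"
  shows "cmod (lacunary_coeffs p (of_real t) n - (\<Sum>j\<le>N. of_real t ^ j * unit_seq (p j) n))
    \<le> (2 * t) ^ Suc N * cmod (lacunary_coeffs p (1/2) n)"
proof (cases "n \<in> range p")
  case False
  then show ?thesis
    by (auto simp: lacunary_coeffs_off unit_seq_def intro!: sum.neutral)
next
  case True
  then obtain J where n: "n = p J"
    by auto
  have "(\<Sum>j\<le>N. complex_of_real t ^ j * unit_seq (p j) (p J)) = (if J \<le> N then of_real t ^ J else 0)"
    using strict_mono_eq[OF p] by (simp add: unit_seq_def if_distrib cong: if_cong)
  moreover have "t ^ J \<le> (2 * t) ^ Suc N * (1/2) ^ J" if "N < J"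
  proof -
    have "t ^ J = (2 * t * (1/2)) ^ J"
      by simp
    also have "\<dots> = (2 * t) ^ J * (1/2) ^ J"
      by (rule power_mult_distrib)
    also have "\<dots> \<le> (2 * t) ^ Suc N * (1/2) ^ J"
      using t that by (intro mult_right_mono power_decreasing) auto
    finally show ?thesis .
  qed
  ultimately show ?thesis
    using t by (simp add: n lacunary_coeffs_at[OF p] norm_power)
qed

definition h_coeffs :: "nat \<Rightarrow> complex \<Rightarrow> nat \<Rightarrow> complex" where
  "h_coeffs m \<mu> = (if m = 0 then lacunary_coeffs (\<lambda>j. 4 * 2 ^ j) \<mu>
     else (\<lambda>n. lacunary_coeffs (\<lambda>j. (6 * m + 4) * 2 ^ j) \<mu> n - lacunary_coeffs (\<lambda>j. (2 * m + 1) * 2 ^ j) \<mu> n))"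

(* v_(m,j), the coefficient of mu^j in h_coeffs m mu *)
definition h_mu_coeff :: "nat \<Rightarrow> nat \<Rightarrow> nat \<Rightarrow> complex" where
  "h_mu_coeff m j = (if m = 0 then unit_seq (4 * 2 ^ j)
     else (\<lambda>n. unit_seq ((6 * m + 4) * 2 ^ j) n - unit_seq ((2 * m + 1) * 2 ^ j) n))"

definition h_coeff_seqs :: "(nat \<Rightarrow> complex) set" where
  "h_coeff_seqs = {h_coeffs m \<mu> | m \<mu>. \<mu> \<in> ball 0 1}"

lemma strict_mono_times_power_two: "0 < a \<Longrightarrow> strict_mono (\<lambda>j. a * 2 ^ j :: nat)"
  by (intro strict_monoI mult_strict_left_mono power_strict_increasing) auto

lemma h_fun_sums:
  assumes "cmod \<mu> < 1" "cmod z < 1"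
  shows "(\<lambda>n. h_coeffs m \<mu> n * z ^ n) sums h_fun m \<mu> z"
proof (cases "m = 0")
  case True
  have "h_fun 0 \<mu> z = (\<Sum>j. \<mu> ^ j * z ^ (4 * 2 ^ j))"
    by (simp add: h_fun_def power_add mult.commute)
  then show ?thesis
    using lacunary_series_sums[OF strict_mono_times_power_two[of 4] _ assms(2), of \<mu>] assms(1) True
    by (simp add: h_coeffs_def)
next
  case False
  define p where "p = (\<lambda>j. (6 * m + 4) * 2 ^ j :: nat)"
  define q where "q = (\<lambda>j. (2 * m + 1) * 2 ^ j :: nat)"
  have p: "strict_mono p" and q: "strict_mono q"
    unfolding p_def q_def by (rule strict_mono_times_power_two; simp)+
  have "(\<lambda>n. lacunary_coeffs p \<mu> n * z ^ n - lacunary_coeffs q \<mu> n * z ^ n)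
      sums ((\<Sum>j. \<mu> ^ j * z ^ p j) - (\<Sum>j. \<mu> ^ j * z ^ q j))"
    using assms by (intro sums_diff lacunary_series_sums p q) auto
  moreover have "h_fun m \<mu> z = (\<Sum>j. \<mu> ^ j * z ^ p j) - (\<Sum>j. \<mu> ^ j * z ^ q j)"
    using False assms suminf_diff[OF lacunary_series_summable[OF p] lacunary_series_summable[OF q]]
    by (simp add: h_fun_def p_def q_def right_diff_distrib)
  ultimately show ?thesis
    using False by (simp add: h_coeffs_def p_def q_def left_diff_distrib)
qed

lemma h_fun_has_fps_expansion:
  assumes "cmod \<mu> < 1"
  shows "h_fun m \<mu> has_fps_expansion Abs_fps (h_coeffs m \<mu>)"
  unfolding has_fps_expansion_def
proof
  have "summable (\<lambda>n. h_coeffs m \<mu> n * (1/2) ^ n)"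
    using h_fun_sums[OF assms, of "1/2"] by (auto simp: sums_iff)
  then have "ereal (norm (1/2 :: complex)) \<le> conv_radius (h_coeffs m \<mu>)"
    by (rule conv_radius_geI)
  then show "0 < fps_conv_radius (Abs_fps (h_coeffs m \<mu>))"
    by (simp add: fps_conv_radius_def order.strict_trans2[rotated])
  have "eventually (\<lambda>z. z \<in> ball 0 1) (nhds (0::complex))"
    by (intro eventually_nhds_in_open) auto
  then show "eventually (\<lambda>z. eval_fps (Abs_fps (h_coeffs m \<mu>)) z = h_fun m \<mu> z) (nhds 0)"
    by eventually_elim (use h_fun_sums[OF assms] in \<open>simp add: eval_fps_def sums_iff\<close>)
qed

lemma taylor_coef_eq_fps_nth: "f has_fps_expansion F \<Longrightarrow> taylor_coef f n = fps_nth F n"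
  by (simp add: fps_nth_fps_expansion taylor_coef_def)

lemma taylor_coef_diff_h_combination:
  assumes "f holomorphic_on ball 0 1" "\<forall>i<k. cmod (\<mu>s i) < 1"
  shows "taylor_coef (\<lambda>z. f z - (\<Sum>i<k. a i * h_fun (ms i) (\<mu>s i) z)) n
       = taylor_coef f n - (\<Sum>i<k. a i * h_coeffs (ms i) (\<mu>s i) n)"
proof -
  have F: "f has_fps_expansion fps_expansion f 0"
    using assms(1) by (intro has_fps_expansion_fps_expansion) auto
  have "(\<lambda>z. f z - (\<Sum>i<k. a i * h_fun (ms i) (\<mu>s i) z)) has_fps_expansion
      fps_expansion f 0 - (\<Sum>i<k. fps_const (a i) * Abs_fps (h_coeffs (ms i) (\<mu>s i)))"
    using assms(2) by (intro has_fps_expansion_diff[OF F] has_fps_expansion_sum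
        has_fps_expansion_cmult_left h_fun_has_fps_expansion) auto
  then show ?thesis
    using taylor_coef_eq_fps_nth[OF F] by (simp add: taylor_coef_eq_fps_nth fps_sum_nth)
qed

lemma odd_times_power_of_two:
  assumes "(k::nat) \<noteq> 0"
  obtains q e where "odd q" "k = q * 2 ^ e"
proof -
  obtain y where "k = 2 ^ multiplicity 2 k * y" "\<not> 2 dvd y"
    using multiplicity_decompose'[of k 2] assms by auto
  then show ?thesis
    using that by (simp add: mult.commute)
qed

locale bounded_below_weight = positive_weight +
  fixes c :: real
  assumes c_pos: "c > 0" and weight_ge: "\<And>n. c \<le> \<omega> n"
begin

lemma weighted_summable_lacunary:
  assumes p: "strict_mono p" and \<mu>: "cmod \<mu> < 1"
  shows "weighted_summable (lacunary_coeffs p \<mu>)"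
proof -
  define f where "f = (\<lambda>n. (cmod (lacunary_coeffs p \<mu> n))\<^sup>2 / \<omega> n)"
  have reindexed: "summable (\<lambda>j. f (p j))"
  proof (rule summable_comparison_test'[where N=0])
    show "summable (\<lambda>j. ((cmod \<mu>)\<^sup>2) ^ j / c)"
      using \<mu> by (intro summable_divide summable_geometric) (simp add: abs_square_less_1)
    fix j
    have "f (p j) = ((cmod \<mu>)\<^sup>2) ^ j / \<omega> (p j)"
      by (simp add: f_def lacunary_coeffs_at[OF p] norm_power power_mult[symmetric] mult.commute)
    also have "\<dots> \<le> ((cmod \<mu>)\<^sup>2) ^ j / c"
      using c_pos weight_ge by (intro divide_left_mono) (auto intro: mult_pos_pos less_le_trans)
    finally show "norm (f (p j)) \<le> ((cmod \<mu>)\<^sup>2) ^ j / c"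
      by (simp add: f_def abs_of_pos weight_pos)
  qed
  have vanish: "f n = 0" if "n \<notin> range p" for n
    using that by (simp add: f_def lacunary_coeffs_off)
  have "summable f"
    using summable_mono_reindex[of p f, OF p vanish] reindexed by simp
  then show ?thesis
    unfolding weighted_summable_def f_def .
qed

lemma weighted_summable_h_coeffs:
  assumes "cmod \<mu> < 1"
  shows "weighted_summable (h_coeffs m \<mu>)"
proof (cases "m = 0")
  case True
  then show ?thesis
    using assms by (simp add: h_coeffs_def weighted_summable_lacunary strict_mono_times_power_two)
next
  case False
  have "weighted_summable (lacunary_coeffs (\<lambda>j. (6 * m + 4) * 2 ^ j) \<mu>)"
    "weighted_summable (lacunary_coeffs (\<lambda>j. (2 * m + 1) * 2 ^ j) \<mu>)"
    using assms by (intro weighted_summable_lacunary strict_mono_times_power_two; simp)+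
  then show ?thesis
    unfolding h_coeffs_def if_not_P[OF False] by (rule weighted_norm_diff(1))
qed

lemma weighted_summable_h_mu_coeff: "weighted_summable (h_mu_coeff m j)"
  by (simp add: h_mu_coeff_def weighted_summable_unit_seq weighted_norm_diff(1))

lemma lacunary_remainder_bound:
  assumes "strict_mono p"
  obtains C where "\<And>t. 0 < t \<Longrightarrow> t \<le> 1/2 \<Longrightarrow>
    weighted_norm (\<lambda>n. lacunary_coeffs p (of_real t) n - (\<Sum>j\<le>N. of_real t ^ j * unit_seq (p j) n))
      \<le> C * t ^ Suc N"
proof
  fix t :: real
  assume t: "0 < t" "t \<le> 1/2"
  show "weighted_norm (\<lambda>n. lacunary_coeffs p (of_real t) n - (\<Sum>j\<le>N. of_real t ^ j * unit_seq (p j) n))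
      \<le> 2 ^ Suc N * weighted_norm (lacunary_coeffs p (1/2)) * t ^ Suc N"
    using weighted_norm_dominated(2)[OF weighted_summable_lacunary[OF assms], of "1/2" "(2 * t) ^ Suc N"]
      lacunary_coeffs_remainder_le[OF assms t] t
    by (simp add: power_mult_distrib mult_ac)
qed

lemma h_coeffs_remainder_bound:
  "\<exists>C. \<forall>t. 0 < t \<longrightarrow> t \<le> 1/2 \<longrightarrow>
    weighted_norm (\<lambda>n. h_coeffs m (of_real t) n - (\<Sum>j\<le>N. of_real t ^ j * h_mu_coeff m j n))
      \<le> C * t ^ Suc N"
proof (cases "m = 0")
  case True
  then show ?thesis
    using lacunary_remainder_bound[OF strict_mono_times_power_two[of 4], of N]
    by (simp add: h_coeffs_def h_mu_coeff_def) blast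
next
  case False
  define p where "p = (\<lambda>j. (6 * m + 4) * 2 ^ j :: nat)"
  define q where "q = (\<lambda>j. (2 * m + 1) * 2 ^ j :: nat)"
  have p: "strict_mono p" and q: "strict_mono q"
    unfolding p_def q_def by (rule strict_mono_times_power_two; simp)+
  define R where "R r t = (\<lambda>n. lacunary_coeffs r (of_real t) n - (\<Sum>j\<le>N. of_real t ^ j * unit_seq (r j) n))"
    for r t
  obtain C\<^sub>p where Cp: "\<And>t. 0 < t \<Longrightarrow> t \<le> 1/2 \<Longrightarrow> weighted_norm (R p t) \<le> C\<^sub>p * t ^ Suc N"
    using lacunary_remainder_bound[OF p] unfolding R_def by blast
  obtain C\<^sub>q where Cq: "\<And>t. 0 < t \<Longrightarrow> t \<le> 1/2 \<Longrightarrow> weighted_norm (R q t) \<le> C\<^sub>q * t ^ Suc N"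
    using lacunary_remainder_bound[OF q] unfolding R_def by blast
  have "weighted_norm (\<lambda>n. h_coeffs m (of_real t) n - (\<Sum>j\<le>N. of_real t ^ j * h_mu_coeff m j n))
      \<le> (C\<^sub>p + C\<^sub>q) * t ^ Suc N" if t: "0 < t" "t \<le> 1/2" for t
  proof -
    have summable: "weighted_summable (R r t)" if "strict_mono r" for r
      unfolding R_def using t that
      by (intro weighted_norm_diff(1) weighted_summable_lacunary weighted_summable_sum
          weighted_norm_scale(1) weighted_summable_unit_seq) auto
    have "(\<lambda>n. h_coeffs m (of_real t) n - (\<Sum>j\<le>N. of_real t ^ j * h_mu_coeff m j n))
        = (\<lambda>n. R p t n - R q t n)"
      using False by (simp add: h_coeffs_def h_mu_coeff_def R_def p_def q_def
          right_diff_distrib sum_subtractf algebra_simps)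
    then show ?thesis
      using weighted_norm_diff(2)[OF summable[OF p] summable[OF q]] Cp[OF t] Cq[OF t]
      by (simp add: distrib_right)
  qed
  then show ?thesis
    by blast
qed

end

sublocale bounded_below_weight \<subseteq> weighted_span \<omega> h_coeff_seqs
  by unfold_locales (auto simp: h_coeff_seqs_def weighted_summable_h_coeffs)

context bounded_below_weight
begin

lemma h_mu_coeff_in_span_closure: "h_mu_coeff m j \<in> span_closure"
proof (rule taylor_coeffs_in_span_closure[where X = "\<lambda>t. h_coeffs m (of_real t)"])
  show "h_coeffs m (of_real t) \<in> span_closure" if "0 < t" "t \<le> 1/2" for t
  proof (intro lin_span_subset_span_closure lin_span_generator)
    show "h_coeffs m (of_real t) \<in> h_coeff_seqs"
      unfolding h_coeff_seqs_def using that by (intro CollectI exI[of _ m] exI[of _ "of_real t"]) auto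
  qed
qed (rule weighted_summable_h_mu_coeff h_coeffs_remainder_bound | simp)+

lemma unit_seq_step:
  assumes "3 \<le> k"
  shows "unit_seq k \<in> span_closure \<or> (\<exists>k'>k. (\<lambda>n. unit_seq k' n - unit_seq k n) \<in> span_closure)"
proof -
  obtain q e where "odd q" and k: "k = q * 2 ^ e"
    using odd_times_power_of_two[of k] assms by auto
  show ?thesis
  proof (cases "q = 1")
    case True
    have "2 \<le> e"
    proof (rule ccontr)
      assume "\<not> 2 \<le> e"
      then have "e = 0 \<or> e = 1"
        by auto
      then show False
        using assms k True by auto
    qed
    then obtain d where "e = 2 + d"
      using le_Suc_ex by blast
    then have "h_mu_coeff 0 d = unit_seq k"
      by (simp add: h_mu_coeff_def k True power_add)
    then show ?thesis
      using h_mu_coeff_in_span_closure[of 0 d] by simp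
  next
    case False
    define m where "m = q div 2"
    have q: "q = 2 * m + 1" and "m \<noteq> 0"
      using \<open>odd q\<close> False by (auto simp: m_def elim!: oddE)
    then have "h_mu_coeff m e = (\<lambda>n. unit_seq ((6 * m + 4) * 2 ^ e) n - unit_seq k n)"
      by (simp add: h_mu_coeff_def k)
    then have "(\<lambda>n. unit_seq ((6 * m + 4) * 2 ^ e) n - unit_seq k n) \<in> span_closure"
      using h_mu_coeff_in_span_closure[of m e] by simp
    moreover have "k < (6 * m + 4) * 2 ^ e"
      unfolding k q by (intro mult_strict_right_mono) auto
    ultimately show ?thesis
      by blast
  qed
qed

lemma unit_seq_in_span_closure:
  assumes "3 \<le> k"
  shows "unit_seq k \<in> span_closure"
proof (rule ccontr)
  assume k_out: "unit_seq k \<notin> span_closure"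
  define B where "B = {j. 3 \<le> j \<and> (\<lambda>n. unit_seq j n - unit_seq k n) \<in> span_closure}"
  have unbounded: "\<exists>j'\<in>B. j' > j" if "j \<in> B" for j
  proof -
    have j: "3 \<le> j" "(\<lambda>n. unit_seq j n - unit_seq k n) \<in> span_closure"
      using that by (auto simp: B_def)
    have "unit_seq j \<notin> span_closure"
      using span_closure_diff[of "unit_seq j", OF _ j(2)] k_out by auto
    then obtain j' where "j < j'" and step: "(\<lambda>n. unit_seq j' n - unit_seq j n) \<in> span_closure"
      using unit_seq_step[OF j(1)] by blast
    have "(\<lambda>n. (unit_seq j' n - unit_seq j n) + (unit_seq j n - unit_seq k n)) \<in> span_closure"
      using step j(2) by (rule span_closure_add)
    then show ?thesis
      using \<open>j < j'\<close> j(1) by (intro bexI[of _ j']) (auto simp: B_def)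
  qed
  have "k \<in> B"
    using assms span_closure_zero by (simp add: B_def)
  then have B: "infinite B"
    using unbounded by (intro infinite_growing) auto
  have "(\<lambda>n. unit_seq (enumerate B i) n - unit_seq k n) \<in> span_closure" for i
    using enumerate_in_set[OF B, of i] by (simp add: B_def)
  then have "unit_seq k \<in> span_closure"
    by (rule unit_seq_in_span_closure_if_chain[OF c_pos weight_ge strict_mono_enumerate[OF B]])
  with k_out show False ..
qed

lemma coeffs_in_span_closure:
  assumes "weighted_summable x" "\<And>n. n < 3 \<Longrightarrow> x n = 0"
  shows "x \<in> span_closure"
proof (rule span_closure_if_units[OF assms(1)])
  fix k
  assume "x k \<noteq> 0"
  then have "3 \<le> k"
    using assms(2) not_less by blast
  then show "unit_seq k \<in> span_closure"
    by (rule unit_seq_in_span_closure)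
qed

lemma h_span_dense: "h_span_dense \<omega>"
  unfolding h_span_dense_def
proof (intro ballI allI impI)
  fix f and \<epsilon> :: real
  assume f: "f \<in> X_omega \<omega>" and "\<epsilon> > 0"
  then have "taylor_coef f \<in> span_closure"
    by (intro coeffs_in_span_closure) (auto simp: X_omega_def weighted_summable_def)
  then obtain s where "s \<in> lin_span h_coeff_seqs"
    and s: "weighted_norm (\<lambda>n. taylor_coef f n - s n) < \<epsilon>"
    using span_closure_approx \<open>\<epsilon> > 0\<close> by blast
  then obtain k :: nat and a g
    where g: "\<forall>i<k. g i \<in> h_coeff_seqs" and s_eq: "s = (\<lambda>n. \<Sum>i<k. a i * g i n)"
    unfolding lin_span_def by blast
  have "\<forall>i<k. \<exists>m \<mu>. g i = h_coeffs m \<mu> \<and> \<mu> \<in> ball 0 1"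
    using g by (simp add: h_coeff_seqs_def)
  then obtain ms \<mu>s where \<mu>s: "\<forall>i<k. \<mu>s i \<in> ball 0 1 \<and> g i = h_coeffs (ms i) (\<mu>s i)"
    by metis
  have "norm_omega \<omega> (\<lambda>z. f z - (\<Sum>i<k. a i * h_fun (ms i) (\<mu>s i) z))
      = weighted_norm (\<lambda>n. taylor_coef f n - s n)"
    using f \<mu>s unfolding norm_omega_def weighted_norm_def s_eq X_omega_def
    by (simp add: taylor_coef_diff_h_combination)
  then show "\<exists>(k::nat) (a::nat \<Rightarrow> complex) (ms::nat \<Rightarrow> nat) (\<mu>s::nat \<Rightarrow> complex).
      (\<forall>i<k. \<mu>s i \<in> ball 0 1) \<and>
      norm_omega \<omega> (\<lambda>z. f z - (\<Sum>i<k. a i * h_fun (ms i) (\<mu>s i) z)) < \<epsilon>"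
    using s \<mu>s by (intro exI[of _ k] exI[of _ a] exI[of _ ms] exI[of _ \<mu>s]) auto
qed

end

theorem theorem2p4:
  shows "(\<forall>\<omega>::nat \<Rightarrow> real. (\<forall>n. \<omega> n > 0) \<and> (\<exists>c>0. \<forall>n. c \<le> \<omega> n) \<longrightarrow> h_span_dense \<omega>)
         \<and> h_span_dense omega0"
proof -
  have dense: "h_span_dense \<omega>"
    if pos: "\<forall>n. \<omega> n > 0" and bounded: "\<exists>c>0. \<forall>n. c \<le> \<omega> n" for \<omega>
  proof -
    obtain c where "c > 0" "\<forall>n. c \<le> \<omega> n"
      using bounded by blast
    then interpret bounded_below_weight \<omega> c
      using pos by unfold_locales auto
    show ?thesis
      by (rule h_span_dense)
  qed
  have "\<forall>n. omega0 n > 0" "\<forall>n. 1 / pi \<le> omega0 n"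
    by (simp_all add: omega0_def divide_right_mono)
  then have "h_span_dense omega0"
    by (intro dense) (auto intro!: exI[of _ "1 / pi"])
  with dense show ?thesis
    by blast
qed

end
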